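(* Let $(X,d)$ be a metric space. There exists $\alpha\in(0,1)$ such that $(X,d^\alpha)$ admits an isometric embedding into some finite-dimensional normed linear space if and only if $X$ is finite.
   Context: For a metric space $(X,d)$ and $\alpha\in(0,1)$, $d^\alpha$ denotes the metric $(x,y)\mapsto d(x,y)^\alpha$. *)

theory Defs
  imports "HOL-Analysis.Analysis"
begin

text \<open>A finite-dimensional real normed linear space is, up to linear isometry,
  R^n equipped with some norm.  We model R^n as the coordinate space of
  real sequences vanishing from index n on.\<close>

definition coord_space :: "nat \<Rightarrow> (nat \<Rightarrow> real) set" where
  "coord_space n = {v. \<forall>i\<ge>n. v i = 0}"

definition is_norm_on_Rn :: "nat \<Rightarrow> ((nat \<Rightarrow> real) \<Rightarrow> real) \<Rightarrow> bool" where
  "is_norm_on_Rn n N \<longleftrightarrow>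
     (\<forall>v\<in>coord_space n. 0 \<le> N v \<and> (N v = 0 \<longleftrightarrow> v = (\<lambda>i. 0))) \<and>
     (\<forall>c::real. \<forall>v\<in>coord_space n. N (\<lambda>i. c * v i) = \<bar>c\<bar> * N v) \<and>
     (\<forall>u\<in>coord_space n. \<forall>v\<in>coord_space n. N (\<lambda>i. u i + v i) \<le> N u + N v)"

definition embeds_isometrically_fin_dim_normed ::
    "'a set \<Rightarrow> ('a \<Rightarrow> 'a \<Rightarrow> real) \<Rightarrow> bool" where
  "embeds_isometrically_fin_dim_normed M e \<longleftrightarrow>
     (\<exists>n N f. is_norm_on_Rn n N \<and> f ` M \<subseteq> coord_space n \<and>
        (\<forall>x\<in>M. \<forall>y\<in>M. N (\<lambda>i. f x i - f y i) = e x y))"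

end

theory Submission
  imports Defs "HOL-Library.Function_Algebras"
begin

text \<open>
  If \<open>d\<^sup>\<alpha>\<close> embeds isometrically into a finite-dimensional space with norm \<open>N\<close>, then on the
  image \<open>S\<close> the function \<open>N\<close> satisfies the triangle inequality for the exponent
  \<open>\<beta> = 1/\<alpha> > 1\<close>: \<open>N(a - c)\<^sup>\<beta> \<le> N(a - b)\<^sup>\<beta> + N(b - c)\<^sup>\<beta>\<close>. If \<open>S\<close> is infinite, it contains a
  sequence \<open>t\<^sub>k\<close> and a point \<open>q\<close> with \<open>\<rho>\<^sub>k = N(t\<^sub>k - q) > 0\<close> tending to \<open>0\<close> (bounded case,
  Bolzano-Weierstrass) or to \<open>\<infinity>\<close>; by compactness of the unit sphere the directions of
  \<open>t\<^sub>k - q\<close> converge to some \<open>w\<close> along a subsequence. Picking \<open>t\<^sub>i, t\<^sub>j, t\<^sub>k\<close> at three very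
  different scales, both increments \<open>t\<^sub>i - t\<^sub>j\<close> and \<open>t\<^sub>j - t\<^sub>k\<close> point almost in direction \<open>w\<close>,
  so their norms add up almost exactly, and \<open>(x + y/2)\<^sup>\<beta> > x\<^sup>\<beta> + y\<^sup>\<beta>\<close> for \<open>y \<ll> x\<close> violates
  the \<open>\<beta>\<close>-triangle inequality.

  Conversely, \<open>d\<^sup>\<alpha>\<close> is again a metric, and a finite metric space embeds isometrically
  into \<open>\<ell>\<^sup>\<infinity>\<close> of its cardinality via the Frechet embedding \<open>x \<mapsto> (d(x, x\<^sub>i))\<^sub>i\<close>.
\<close>

text \<open>Pointwise operations, so that norm axioms on \<open>coord_space n\<close> read \<open>N (u + v) \<le> N u + N v\<close>
  and \<open>N (c *\<^sub>R v) = \<bar>c\<bar> * N v\<close>; addition and zero come from \<open>Function_Algebras\<close>.\<close>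

instantiation "fun" :: (type, real_vector) real_vector
begin

definition scaleR_fun :: "real \<Rightarrow> ('a \<Rightarrow> 'b) \<Rightarrow> 'a \<Rightarrow> 'b" where
  "scaleR_fun c f = (\<lambda>x. c *\<^sub>R f x)"

instance by standard (simp_all add: scaleR_fun_def fun_eq_iff algebra_simps)

end

lemma scaleR_fun_apply [simp]: "(c *\<^sub>R f) x = c *\<^sub>R f x"
  by (simp add: scaleR_fun_def)

lemma sum_fun_apply: "(\<Sum>i\<in>A. f i) x = (\<Sum>i\<in>A. f i x)"
  by (induction A rule: infinite_finite_induct) auto

lemma subspace_coord_space: "subspace (coord_space n)"
  unfolding subspace_def coord_space_def by simp

lemmas coord_space_closed [simp, intro] =
  subspace_0[OF subspace_coord_space] subspace_add[OF subspace_coord_space]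
  subspace_neg[OF subspace_coord_space] subspace_diff[OF subspace_coord_space]
  subspace_scale[OF subspace_coord_space]

section \<open>Elementary real analysis\<close>

lemma powr_add_le_add_powr:
  fixes a b \<alpha> :: real
  assumes "0 \<le> a" "0 \<le> b" "0 < \<alpha>" "\<alpha> \<le> 1"
  shows "(a + b) powr \<alpha> \<le> a powr \<alpha> + b powr \<alpha>"
proof (cases "a + b = 0")
  case True
  then show ?thesis
    using assms by simp
next
  case False
  define s where "s = a + b"
  have s: "0 < s"
    using assms False by (simp add: s_def)
  have frac_le: "x / s \<le> (x / s) powr \<alpha>" if "0 \<le> x" "x \<le> s" for x
    using powr_mono'[of \<alpha> 1 "x / s"] that s assms by simp
  have "1 = a / s + b / s"
    using s by (simp add: s_def flip: add_divide_distrib)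
  also have "\<dots> \<le> (a / s) powr \<alpha> + (b / s) powr \<alpha>"
    using assms by (intro add_mono frac_le) (auto simp: s_def)
  also have "\<dots> = (a powr \<alpha> + b powr \<alpha>) / s powr \<alpha>"
    using assms s by (simp add: powr_divide add_divide_distrib)
  finally show ?thesis
    using s by (simp add: s_def le_divide_eq)
qed

lemma Metric_space_powr:
  assumes "Metric_space X d" "0 < \<alpha>" "\<alpha> \<le> 1"
  shows "Metric_space X (\<lambda>x y. d x y powr \<alpha>)"
proof -
  interpret Metric_space X d
    by fact
  show ?thesis
  proof
    fix x y z
    assume xyz: "x \<in> X" "y \<in> X" "z \<in> X"
    have "d x z powr \<alpha> \<le> (d x y + d y z) powr \<alpha>"
      using triangle[OF xyz] assms xyz by (intro powr_mono2) auto
    also have "\<dots> \<le> d x y powr \<alpha> + d y z powr \<alpha>"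
      using assms xyz by (intro powr_add_le_add_powr) auto
    finally show "d x z powr \<alpha> \<le> d x y powr \<alpha> + d y z powr \<alpha>" .
  qed (use commute in auto)
qed

lemma powr_add_half_gt:
  fixes x y \<beta> :: real
  assumes "1 < \<beta>" "0 < x" "0 < y" and small: "y \<le> (1/4) powr (1/(\<beta>-1)) * x"
  shows "x powr \<beta> + y powr \<beta> < (x + y/2) powr \<beta>"
proof -
  define z where "z = y / x"
  have z: "0 < z" "y = x * z"
    using assms by (simp_all add: z_def)
  have "z \<le> (1/4) powr (1/(\<beta>-1))"
    using small assms by (simp add: z_def pos_divide_le_eq)
  then have "z powr (\<beta>-1) \<le> ((1/4) powr (1/(\<beta>-1))) powr (\<beta>-1)"
    using assms z by (intro powr_mono2) auto
  also have "\<dots> = 1/4"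
    using assms by (simp add: powr_powr)
  finally have "z * z powr (\<beta>-1) \<le> z / 4"
    using z by simp
  then have z_small: "z powr \<beta> \<le> z / 4"
    using z by (simp add: powr_diff)
  have "x powr \<beta> + y powr \<beta> = x powr \<beta> * (1 + z powr \<beta>)"
    using assms z by (simp add: powr_mult distrib_left)
  also have "\<dots> < x powr \<beta> * (1 + z/2)"
    using z_small z assms by (intro mult_strict_left_mono) auto
  also have "\<dots> \<le> x powr \<beta> * (1 + z/2) powr \<beta>"
    using powr_mono[of 1 \<beta> "1 + z/2"] z assms by (intro mult_left_mono) auto
  also have "\<dots> = (x * (1 + z/2)) powr \<beta>"
    using assms z by (simp add: powr_mult)
  also have "x * (1 + z/2) = x + y/2"
    using z by (simp add: algebra_simps)
  finally show ?thesis .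
qed

lemma exists_separated_triple:
  fixes \<rho> :: "nat \<Rightarrow> real"
  assumes lim: "\<rho> \<longlonglongrightarrow> 0 \<or> filterlim \<rho> at_top sequentially"
    and pos: "\<And>k. K \<le> k \<Longrightarrow> 0 < \<rho> k" and "0 < \<delta>"
  shows "\<exists>i j k. K \<le> i \<and> K \<le> j \<and> K \<le> k \<and> \<rho> j \<le> \<delta> * \<rho> i \<and> \<rho> k \<le> \<delta> * \<rho> j"
  using lim
proof
  assume lim0: "\<rho> \<longlonglongrightarrow> 0"
  have "\<exists>j\<ge>K. \<rho> j \<le> \<delta> * \<rho> i" if "K \<le> i" for i
  proof -
    have "\<forall>\<^sub>F j in sequentially. K \<le> j \<and> \<rho> j < \<delta> * \<rho> i"
      using pos[OF that] \<open>0 < \<delta>\<close>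
      by (intro eventually_conj eventually_ge_at_top order_tendstoD(2)[OF lim0]) simp
    then show ?thesis
      using eventually_happens'[OF sequentially_bot] less_imp_le by blast
  qed
  then show ?thesis
    by (meson order_refl)
next
  assume lim_inf: "filterlim \<rho> at_top sequentially"
  have "\<exists>j\<ge>K. \<rho> i \<le> \<delta> * \<rho> j" if "K \<le> i" for i
  proof -
    have "\<forall>\<^sub>F j in sequentially. K \<le> j \<and> \<rho> i / \<delta> \<le> \<rho> j"
      using lim_inf by (intro eventually_conj eventually_ge_at_top) (simp add: filterlim_at_top)
    then obtain j where "K \<le> j" "\<rho> i / \<delta> \<le> \<rho> j"
      using eventually_happens'[OF sequentially_bot] by blast
    then show ?thesis
      using \<open>0 < \<delta>\<close> by (auto simp: pos_divide_le_eq mult.commute)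
  qed
  then show ?thesis
    by (meson order_refl)
qed

section \<open>Norms on coordinate spaces\<close>

definition l1_norm :: "nat \<Rightarrow> (nat \<Rightarrow> real) \<Rightarrow> real" where
  "l1_norm n v = (\<Sum>i<n. \<bar>v i\<bar>)"

lemma abs_le_l1_norm: "v \<in> coord_space n \<Longrightarrow> \<bar>v i\<bar> \<le> l1_norm n v"
  unfolding l1_norm_def coord_space_def
  by (cases "i < n") (auto intro: member_le_sum sum_nonneg)

lemma l1_norm_scaleR: "l1_norm n (c *\<^sub>R v) = \<bar>c\<bar> * l1_norm n v"
  by (simp add: l1_norm_def abs_mult sum_distrib_left)

lemma coordwise_convergent_subseq:
  fixes s :: "nat \<Rightarrow> nat \<Rightarrow> real"
  assumes "\<And>k i. \<bar>s k i\<bar> \<le> M"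
  shows "\<exists>r u. strict_mono r \<and> u \<in> coord_space n \<and> (\<forall>i<n. (\<lambda>k. s (r k) i) \<longlonglongrightarrow> u i)"
proof -
  have "bounded ((\<lambda>x. x i) ` range s)" for i
    using assms by (auto simp: bounded_iff)
  then have "\<forall>\<delta>\<subseteq>{..<n}. \<exists>l r. strict_mono r \<and>
      (\<forall>\<epsilon>>0. \<forall>\<^sub>F k in sequentially. \<forall>i\<in>\<delta>. dist (s (r k) i) (l i) < \<epsilon>)"
    by (intro compact_lemma_general[of "{..<n}" "\<lambda>x i. x i" s id]) auto
  then obtain l r where r: "strict_mono r"
    and l: "\<And>\<epsilon>. \<epsilon> > 0 \<Longrightarrow> \<forall>\<^sub>F k in sequentially. \<forall>i\<in>{..<n}. dist (s (r k) i) (l i) < \<epsilon>"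
    by blast
  define u where "u i = (if i < n then l i else 0)" for i
  have "(\<lambda>k. s (r k) i) \<longlonglongrightarrow> u i" if "i < n" for i
    unfolding tendsto_iff using l that by (fastforce simp: u_def elim: eventually_mono)
  moreover have "u \<in> coord_space n"
    by (simp add: u_def coord_space_def)
  ultimately show ?thesis
    using r by blast
qed

lemma l1_norm_diff_tendsto_zero:
  "\<forall>i<n. (\<lambda>k. s k i) \<longlonglongrightarrow> u i \<Longrightarrow> (\<lambda>k. l1_norm n (s k - u)) \<longlonglongrightarrow> 0"
  unfolding l1_norm_def by (auto intro!: tendsto_eq_intros)

locale coord_norm =
  fixes n :: nat and N :: "(nat \<Rightarrow> real) \<Rightarrow> real"
  assumes is_norm: "is_norm_on_Rn n N"
begin

abbreviation V :: "(nat \<Rightarrow> real) set" where "V \<equiv> coord_space n"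

lemma N_nonneg: "v \<in> V \<Longrightarrow> 0 \<le> N v"
  using is_norm by (simp add: is_norm_on_Rn_def)

lemma N_eq_0_iff: "v \<in> V \<Longrightarrow> N v = 0 \<longleftrightarrow> v = 0"
  using is_norm by (simp add: is_norm_on_Rn_def zero_fun_def)

lemma N_scaleR: "v \<in> V \<Longrightarrow> N (c *\<^sub>R v) = \<bar>c\<bar> * N v"
  using is_norm by (simp add: is_norm_on_Rn_def scaleR_fun_def)

lemma N_add_le: "u \<in> V \<Longrightarrow> v \<in> V \<Longrightarrow> N (u + v) \<le> N u + N v"
  using is_norm by (simp add: is_norm_on_Rn_def plus_fun_def)

lemma N_zero [simp]: "N 0 = 0"
  using N_eq_0_iff by blast

lemma N_pos_iff: "v \<in> V \<Longrightarrow> 0 < N v \<longleftrightarrow> v \<noteq> 0"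
  using N_nonneg N_eq_0_iff by (auto simp: order_less_le)

lemma N_uminus: "v \<in> V \<Longrightarrow> N (- v) = N v"
  using N_scaleR[of v "-1"] by simp

lemma N_minus_commute: "u \<in> V \<Longrightarrow> v \<in> V \<Longrightarrow> N (u - v) = N (v - u)"
  using N_uminus[of "v - u"] by auto

lemma N_diff_le: "u \<in> V \<Longrightarrow> v \<in> V \<Longrightarrow> N (u - v) \<le> N u + N v"
  using N_add_le[of u "- v"] N_uminus[of v] by auto

lemma N_diff_triangle: "u \<in> V \<Longrightarrow> v \<in> V \<Longrightarrow> w \<in> V \<Longrightarrow> N (u - w) \<le> N (u - v) + N (v - w)"
  using N_add_le[of "u - v" "v - w"] by auto

lemma N_diff_ge: "u \<in> V \<Longrightarrow> v \<in> V \<Longrightarrow> N u - N v \<le> N (u - v)"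
  using N_add_le[of "u - v" v] by auto

lemma abs_N_diff_le: "u \<in> V \<Longrightarrow> v \<in> V \<Longrightarrow> \<bar>N u - N v\<bar> \<le> N (u - v)"
  using N_diff_ge[of u v] N_diff_ge[of v u] N_minus_commute[of u v] by auto

lemma N_sum_le: "(\<And>i. i \<in> A \<Longrightarrow> x i \<in> V) \<Longrightarrow> N (\<Sum>i\<in>A. x i) \<le> (\<Sum>i\<in>A. N (x i))"
proof (induction A rule: infinite_finite_induct)
  case (insert i A)
  have "(\<Sum>i\<in>A. x i) \<in> V"
    using insert.prems by (intro subspace_sum[OF subspace_coord_space]) auto
  have "N (\<Sum>i\<in>insert i A. x i) = N (x i + (\<Sum>i\<in>A. x i))"
    by (simp only: sum.insert[OF insert.hyps])
  also have "\<dots> \<le> N (x i) + N (\<Sum>i\<in>A. x i)"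
    using insert.prems \<open>(\<Sum>i\<in>A. x i) \<in> V\<close> by (intro N_add_le) auto
  also have "\<dots> \<le> (\<Sum>i\<in>insert i A. N (x i))"
    using insert by simp
  finally show ?case .
qed auto

lemma N_le_l1_norm: "\<exists>C\<ge>0. \<forall>v\<in>V. N v \<le> C * l1_norm n v"
proof (intro exI conjI ballI)
  define e :: "nat \<Rightarrow> nat \<Rightarrow> real" where "e j = (\<lambda>i. if i = j then 1 else 0)" for j
  have e: "e j \<in> V" if "j < n" for j
    using that by (simp add: e_def coord_space_def)
  define C where "C = (\<Sum>j<n. N (e j))"
  show "0 \<le> C"
    unfolding C_def using e N_nonneg by (auto intro: sum_nonneg)
  fix v assume v: "v \<in> V"
  have "v = (\<Sum>j<n. v j *\<^sub>R e j)"
    using v by (auto simp: fun_eq_iff sum_fun_apply e_def coord_space_def if_distrib cong: if_cong)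
  then have "N v \<le> (\<Sum>j<n. \<bar>v j\<bar> * N (e j))"
    using N_sum_le[of "{..<n}" "\<lambda>j. v j *\<^sub>R e j"] e N_scaleR by auto
  also have "\<dots> \<le> (\<Sum>j<n. \<bar>v j\<bar> * C)"
    unfolding C_def using e N_nonneg
    by (intro sum_mono mult_left_mono member_le_sum) auto
  finally show "N v \<le> C * l1_norm n v"
    by (simp add: l1_norm_def sum_distrib_left mult.commute)
qed

lemma N_tendsto_zero_of_l1_norm:
  assumes "\<And>k. s k \<in> V" "u \<in> V" "(\<lambda>k. l1_norm n (s k - u)) \<longlonglongrightarrow> 0"
  shows "(\<lambda>k. N (s k - u)) \<longlonglongrightarrow> 0"
proof -
  obtain C where C: "\<And>v. v \<in> V \<Longrightarrow> N v \<le> C * l1_norm n v"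
    using N_le_l1_norm by blast
  show ?thesis
  proof (rule Lim_null_comparison)
    show "\<forall>\<^sub>F k in sequentially. norm (N (s k - u)) \<le> C * l1_norm n (s k - u)"
      using assms C N_nonneg[of "s _ - u"] by (intro always_eventually) auto
    show "(\<lambda>k. C * l1_norm n (s k - u)) \<longlonglongrightarrow> 0"
      using tendsto_mult_right_zero[OF assms(3)] .
  qed
qed

lemma N_tendsto_if_diff_tendsto_zero:
  assumes "\<And>k. s k \<in> V" "u \<in> V" "(\<lambda>k. N (s k - u)) \<longlonglongrightarrow> 0"
  shows "(\<lambda>k. N (s k)) \<longlonglongrightarrow> N u"
proof -
  have "(\<lambda>k. N (s k) - N u) \<longlonglongrightarrow> 0"
    using abs_N_diff_le assms by (intro Lim_null_comparison[OF _ assms(3)] always_eventually) simp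
  then show ?thesis
    by (rule LIM_zero_cancel)
qed

lemma l1_unit_seq_N_not_tendsto_zero:
  fixes g :: "nat \<Rightarrow> nat \<Rightarrow> real"
  assumes g: "\<And>k. g k \<in> V" "\<And>k. l1_norm n (g k) = 1"
  shows "\<not> (\<lambda>k. N (g k)) \<longlonglongrightarrow> 0"
proof
  assume lim0: "(\<lambda>k. N (g k)) \<longlonglongrightarrow> 0"
  have "\<bar>g k i\<bar> \<le> 1" for k i
    using abs_le_l1_norm[OF g(1)[of k], of i] g(2)[of k] by simp
  then obtain r u where r: "strict_mono r" and u: "u \<in> V"
    and lim_coord: "\<forall>i<n. (\<lambda>k. g (r k) i) \<longlonglongrightarrow> u i"
    using coordwise_convergent_subseq[of g 1 n] by blast
  have "(\<lambda>k. l1_norm n (g (r k))) \<longlonglongrightarrow> l1_norm n u"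
    using lim_coord unfolding l1_norm_def by (auto intro!: tendsto_intros)
  then have l1_u: "l1_norm n u = 1"
    using g(2) by (simp add: LIMSEQ_const_iff)
  have "(\<lambda>k. N (g (r k) - u)) \<longlonglongrightarrow> 0"
    using g(1) u l1_norm_diff_tendsto_zero[OF lim_coord] by (rule N_tendsto_zero_of_l1_norm)
  with g(1) u have "(\<lambda>k. N (g (r k))) \<longlonglongrightarrow> N u"
    by (rule N_tendsto_if_diff_tendsto_zero)
  moreover have "(\<lambda>k. N (g (r k))) \<longlonglongrightarrow> 0"
    using LIMSEQ_subseq_LIMSEQ[OF lim0 r] by (simp add: comp_def)
  ultimately have "N u = 0"
    by (rule LIMSEQ_unique)
  then show False
    using N_eq_0_iff[OF u] l1_u by (simp add: l1_norm_def)
qed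

lemma l1_norm_le_N: "\<exists>c>0. \<forall>v\<in>V. c * l1_norm n v \<le> N v"
proof (rule ccontr)
  assume no_bound: "\<not> ?thesis"
  have "\<exists>v\<in>V. l1_norm n v = 1 \<and> N v < inverse (Suc k)" for k
  proof -
    obtain v where v: "v \<in> V" "N v < inverse (Suc k) * l1_norm n v"
      using no_bound by (auto simp: not_le dest: spec[of _ "inverse (Suc k)"])
    have "0 < inverse (Suc k) * l1_norm n v"
      using v N_nonneg[of v] by linarith
    then have l1_pos: "0 < l1_norm n v"
      by (simp add: zero_less_mult_iff)
    define w where "w = inverse (l1_norm n v) *\<^sub>R v"
    have "w \<in> V" "l1_norm n w = 1"
      using v(1) l1_pos by (auto simp: w_def l1_norm_scaleR)
    moreover have "N w < inverse (Suc k)"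
      using v l1_pos N_scaleR[of v] by (simp add: w_def field_simps)
    ultimately show ?thesis
      by blast
  qed
  then obtain g where g: "\<And>k. g k \<in> V" "\<And>k. l1_norm n (g k) = 1"
    "\<And>k. N (g k) < inverse (Suc k)"
    by metis
  have "(\<lambda>k. N (g k)) \<longlonglongrightarrow> 0"
  proof (rule Lim_null_comparison)
    show "\<forall>\<^sub>F k in sequentially. norm (N (g k)) \<le> inverse (real (Suc k))"
      using g(3) N_nonneg[OF g(1)] by (intro always_eventually allI) (simp add: less_imp_le)
    show "(\<lambda>k. inverse (real (Suc k))) \<longlonglongrightarrow> 0"
      by (rule LIMSEQ_inverse_real_of_nat)
  qed
  with g(1,2) show False
    by (rule l1_unit_seq_N_not_tendsto_zero[THEN notE])
qed

lemma N_bounded_seq_convergent_subseq: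
  fixes s :: "nat \<Rightarrow> nat \<Rightarrow> real"
  assumes s: "\<And>k. s k \<in> V" and bounded: "\<And>k. N (s k) \<le> B"
  shows "\<exists>r u. strict_mono r \<and> u \<in> V \<and> (\<lambda>k. N (s (r k) - u)) \<longlonglongrightarrow> 0"
proof -
  obtain c where c: "c > 0" "\<And>v. v \<in> V \<Longrightarrow> c * l1_norm n v \<le> N v"
    using l1_norm_le_N by blast
  have "\<bar>s k i\<bar> \<le> B / c" for k i
  proof -
    have "c * \<bar>s k i\<bar> \<le> c * l1_norm n (s k)"
      using c(1) abs_le_l1_norm[OF s] by simp
    also have "\<dots> \<le> B"
      using c(2)[OF s] bounded by (rule order_trans)
    finally show ?thesis
      using c(1) by (simp add: pos_le_divide_eq mult.commute)
  qed
  then obtain r u where "strict_mono r" "u \<in> V" "\<forall>i<n. (\<lambda>k. s (r k) i) \<longlonglongrightarrow> u i"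
    using coordwise_convergent_subseq[of s "B / c" n] by blast
  moreover have "(\<lambda>k. N (s (r k) - u)) \<longlonglongrightarrow> 0"
    using s \<open>u \<in> V\<close> l1_norm_diff_tendsto_zero[OF \<open>\<forall>i<n. _\<close>]
    by (rule N_tendsto_zero_of_l1_norm)
  ultimately show ?thesis
    by blast
qed

lemma infinite_set_degenerate_seq:
  assumes "S \<subseteq> V" "infinite S"
  obtains t :: "nat \<Rightarrow> nat \<Rightarrow> real" and q where "range t \<subseteq> S" "q \<in> V"
    "\<forall>\<^sub>F k in sequentially. 0 < N (t k - q)"
    "(\<lambda>k. N (t k - q)) \<longlonglongrightarrow> 0 \<or> filterlim (\<lambda>k. N (t k - q)) at_top sequentially"
proof (cases "\<exists>B. \<forall>a\<in>S. N a \<le> B")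
  case True
  then obtain B where B: "\<And>a. a \<in> S \<Longrightarrow> N a \<le> B"
    by blast
  obtain s :: "nat \<Rightarrow> nat \<Rightarrow> real" where s: "inj s" "range s \<subseteq> S"
    using infinite_countable_subset[OF assms(2)] by blast
  then have sV: "s k \<in> V" for k
    using assms(1) by blast
  obtain r u where r: "strict_mono r" "u \<in> V" "(\<lambda>k. N (s (r k) - u)) \<longlonglongrightarrow> 0"
    using N_bounded_seq_convergent_subseq[of s B] sV B s(2) by blast
  have "finite ((s \<circ> r) -` {u})"
    using s(1) strict_mono_imp_inj_on[OF r(1)] by (intro finite_vimageI) (auto intro: inj_compose)
  then have "\<forall>\<^sub>F k in sequentially. s (r k) \<noteq> u"
    by (simp add: cofinite_eq_sequentially[symmetric] eventually_cofinite vimage_def)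
  then have "\<forall>\<^sub>F k in sequentially. 0 < N (s (r k) - u)"
    by (rule eventually_mono) (simp add: N_pos_iff sV r(2))
  then show ?thesis
    using that[of "s \<circ> r" u] s r by auto
next
  case False
  obtain q where q: "q \<in> S"
    using infinite_imp_nonempty[OF assms(2)] by blast
  have "\<exists>a\<in>S. real k + N q < N a" for k
    using False by (meson not_le)
  then obtain t where t: "\<And>k. t k \<in> S" "\<And>k. real k + N q < N (t k)"
    by metis
  have tqV: "t k \<in> V" "q \<in> V" for k
    using t(1) q assms(1) by auto
  have far: "real k < N (t k - q)" for k
    using N_diff_ge[OF tqV, of k] t(2)[of k] by linarith
  have "filterlim (\<lambda>k. N (t k - q)) at_top sequentially"
    using far by (intro filterlim_at_top_mono[OF filterlim_real_sequentially] always_eventually)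
      (auto intro: less_imp_le)
  moreover have "\<forall>\<^sub>F k in sequentially. 0 < N (t k - q)"
    using far by (intro always_eventually) (auto intro: le_less_trans[OF of_nat_0_le_iff])
  ultimately show ?thesis
    using that[of t q] t tqV by auto
qed

lemma exists_subseq_converging_direction:
  fixes t :: "nat \<Rightarrow> nat \<Rightarrow> real"
  assumes t: "\<And>k. t k \<in> V" and q: "q \<in> V"
    and pos: "\<forall>\<^sub>F k in sequentially. 0 < N (t k - q)"
  obtains r w where "strict_mono r" "w \<in> V" "N w = 1"
    "\<And>\<epsilon>. \<epsilon> > 0 \<Longrightarrow> \<forall>\<^sub>F k in sequentially.
       N (t (r k) - q - N (t (r k) - q) *\<^sub>R w) \<le> \<epsilon> * N (t (r k) - q)"
proof -
  define \<rho> where "\<rho> k = N (t k - q)" for k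
  define d where "d k = inverse (\<rho> k) *\<^sub>R (t k - q)" for k
  have dV: "d k \<in> V" for k
    using t q by (simp add: d_def)
  have Nd: "N (d k) = inverse (\<rho> k) * \<rho> k" for k
    using N_scaleR[of "t k - q"] t q N_nonneg[of "t k - q"] by (simp add: d_def \<rho>_def)
  then have "N (d k) \<le> 1" for k
    by (cases "\<rho> k = 0") auto
  then obtain r w where r: "strict_mono r" and w: "w \<in> V"
    and lim: "(\<lambda>k. N (d (r k) - w)) \<longlonglongrightarrow> 0"
    using N_bounded_seq_convergent_subseq[of d 1] dV by blast
  have pos_r: "\<forall>\<^sub>F k in sequentially. 0 < \<rho> (r k)"
    using eventually_subseq[OF r pos] by (simp add: \<rho>_def)
  have "(\<lambda>k. N (d (r k))) \<longlonglongrightarrow> N w"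
    using dV w lim by (rule N_tendsto_if_diff_tendsto_zero)
  moreover have "\<forall>\<^sub>F k in sequentially. N (d (r k)) = 1"
    using pos_r by (rule eventually_mono) (simp add: Nd)
  ultimately have Nw: "N w = 1"
    using LIMSEQ_unique tendsto_eventually by metis
  have "\<forall>\<^sub>F k in sequentially. N (t (r k) - q - \<rho> (r k) *\<^sub>R w) \<le> \<epsilon> * \<rho> (r k)"
    if "\<epsilon> > 0" for \<epsilon>
    using eventually_conj[OF pos_r order_tendstoD(2)[OF lim that]]
  proof (rule eventually_mono)
    fix k assume k: "0 < \<rho> (r k) \<and> N (d (r k) - w) < \<epsilon>"
    have "t (r k) - q - \<rho> (r k) *\<^sub>R w = \<rho> (r k) *\<^sub>R (d (r k) - w)"
      using k by (simp add: d_def algebra_simps)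
    then have "N (t (r k) - q - \<rho> (r k) *\<^sub>R w) = \<rho> (r k) * N (d (r k) - w)"
      using N_scaleR[of "d (r k) - w"] dV w k by simp
    also have "\<dots> \<le> \<epsilon> * \<rho> (r k)"
      using k by (simp add: mult.commute)
    finally show "N (t (r k) - q - \<rho> (r k) *\<^sub>R w) \<le> \<epsilon> * \<rho> (r k)" .
  qed
  then show ?thesis
    using that r w Nw by (simp add: \<rho>_def)
qed

lemma N_diff_near_direction:
  assumes "a \<in> V" "c \<in> V" "q \<in> V" "w \<in> V" "N w = 1" "0 \<le> s"
  shows "N (a - c - r *\<^sub>R w) \<le> N (a - q - r *\<^sub>R w) + N (c - q - s *\<^sub>R w) + s"
proof -
  have split: "a - c - r *\<^sub>R w = (a - q - r *\<^sub>R w) - (c - q - s *\<^sub>R w) - s *\<^sub>R w"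
    by (simp add: algebra_simps)
  have "N ((a - q - r *\<^sub>R w) - (c - q - s *\<^sub>R w) - s *\<^sub>R w)
      \<le> N (a - q - r *\<^sub>R w - (c - q - s *\<^sub>R w)) + N (s *\<^sub>R w)"
    by (intro N_diff_le coord_space_closed assms)
  also have "\<dots> \<le> N (a - q - r *\<^sub>R w) + N (c - q - s *\<^sub>R w) + N (s *\<^sub>R w)"
    by (intro add_right_mono N_diff_le coord_space_closed assms)
  finally show ?thesis
    using N_scaleR[of w s] assms by (simp only: split)
qed

lemma N_near_scaled_direction:
  assumes A: "A \<in> V" and w: "w \<in> V" "N w = 1" and "0 \<le> x"
    and near: "N (A - x *\<^sub>R w) \<le> x / 10"
  shows "9/10 * x \<le> N A" "N A \<le> 11/10 * x" "N (A - N A *\<^sub>R w) \<le> N A / 4"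
proof -
  have "\<bar>N A - x\<bar> \<le> x / 10"
    using abs_N_diff_le[of A "x *\<^sub>R w"] N_scaleR[OF w(1), of x] assms by simp
  then show lower: "9/10 * x \<le> N A" and "N A \<le> 11/10 * x"
    unfolding abs_le_iff by linarith+
  have "N (A - N A *\<^sub>R w) \<le> N (A - x *\<^sub>R w) + N (x *\<^sub>R w - N A *\<^sub>R w)"
    by (intro N_diff_triangle coord_space_closed assms)
  moreover have "N (x *\<^sub>R w - N A *\<^sub>R w) = \<bar>N A - x\<bar>"
    using N_scaleR[OF w(1), of "x - N A"] w by (simp add: scaleR_diff_left abs_minus_commute)
  ultimately show "N (A - N A *\<^sub>R w) \<le> N A / 4"
    using near \<open>\<bar>N A - x\<bar> \<le> x / 10\<close> lower by linarith
qed

lemma N_add_ge_of_aligned: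
  assumes A: "A \<in> V" and B: "B \<in> V" and w: "w \<in> V" "N w = 1" and pos: "0 < N A"
    and aligned_A: "N (A - N A *\<^sub>R w) \<le> N A / 4"
    and aligned_B: "N (B - N B *\<^sub>R w) \<le> N B / 4"
  shows "N A + N B / 2 \<le> N (A + B)"
proof -
  define c where "c = N B / N A"
  have c: "0 \<le> c" "c * N A = N B"
    using pos N_nonneg[OF B] by (simp_all add: c_def)
  define R where "R = B - c *\<^sub>R A"
  have R: "R = (B - N B *\<^sub>R w) - c *\<^sub>R (A - N A *\<^sub>R w)"
    using c by (simp add: R_def algebra_simps)
  have "N R \<le> N (B - N B *\<^sub>R w) + N (c *\<^sub>R (A - N A *\<^sub>R w))"
    unfolding R by (intro N_diff_le coord_space_closed A B w)
  moreover have "N (c *\<^sub>R (A - N A *\<^sub>R w)) = c * N (A - N A *\<^sub>R w)"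
    using N_scaleR[of "A - N A *\<^sub>R w" c] A w c(1) by simp
  moreover have "c * N (A - N A *\<^sub>R w) \<le> c * (N A / 4)"
    using aligned_A c(1) by (rule mult_left_mono)
  ultimately have NR: "N R \<le> N B / 2"
    using aligned_B c(2) by linarith
  have "(1 + c) *\<^sub>R A = (A + B) - R"
    by (simp add: R_def algebra_simps)
  then have "N ((1 + c) *\<^sub>R A) \<le> N (A + B) + N R"
    unfolding R_def by (simp only:) (intro N_diff_le coord_space_closed A B)
  moreover have "N ((1 + c) *\<^sub>R A) = N A + N B"
    using N_scaleR[OF A, of "1 + c"] c by (simp add: distrib_right)
  ultimately show ?thesis
    using NR by linarith
qed

lemma aligned_triple_violates_powr_triangle:
  fixes \<beta> :: real
  defines "\<kappa> \<equiv> (1/4) powr (1/(\<beta>-1))"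
  assumes "1 < \<beta>" and abc: "a \<in> V" "b \<in> V" "c \<in> V" and w: "w \<in> V" "N w = 1"
    and xy: "0 < x" "0 < y" "y \<le> \<kappa> / 2 * x"
    and near_ab: "N (a - b - x *\<^sub>R w) \<le> x / 10" and near_bc: "N (b - c - y *\<^sub>R w) \<le> y / 10"
  shows "N (a - b) powr \<beta> + N (b - c) powr \<beta> < N (a - c) powr \<beta>"
proof -
  define A B where "A = a - b" and "B = b - c"
  have AB: "A \<in> V" "B \<in> V" "A + B = a - c"
    using abc by (auto simp: A_def B_def)
  note A_aligned = N_near_scaled_direction[OF AB(1) w less_imp_le[OF xy(1)] near_ab[folded A_def]]
  note B_aligned = N_near_scaled_direction[OF AB(2) w less_imp_le[OF xy(2)] near_bc[folded B_def]]
  have NA: "0 < N A" and NB: "0 < N B"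
    using xy A_aligned(1) B_aligned(1) by linarith+
  have \<kappa>: "0 \<le> \<kappa>"
    by (simp add: \<kappa>_def)
  have "\<kappa> * x \<le> \<kappa> * (10/9 * N A)"
    using A_aligned(1) \<kappa> by (intro mult_left_mono) auto
  moreover have "\<kappa> / 2 * x = 1/2 * (\<kappa> * x)" "\<kappa> * (10/9 * N A) = 10/9 * (\<kappa> * N A)" "0 \<le> \<kappa> * N A"
    using \<kappa> NA by simp_all
  ultimately have "N B \<le> \<kappa> * N A"
    using B_aligned(2) xy(3) by linarith
  then have "N A powr \<beta> + N B powr \<beta> < (N A + N B / 2) powr \<beta>"
    using powr_add_half_gt[OF \<open>1 < \<beta>\<close> NA NB] by (simp add: \<kappa>_def)
  also have "\<dots> \<le> N (A + B) powr \<beta>"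
    using N_add_ge_of_aligned[OF AB(1,2) w NA A_aligned(3) B_aligned(3)] NA NB \<open>1 < \<beta>\<close>
    by (intro powr_mono2) auto
  finally show ?thesis
    by (simp only: A_def B_def AB(3)[unfolded A_def B_def])
qed

lemma aligned_degenerate_seq_violates_powr_triangle:
  fixes t :: "nat \<Rightarrow> nat \<Rightarrow> real" and \<beta> :: real
  assumes "1 < \<beta>" and t: "\<And>k. t k \<in> V" and q: "q \<in> V" and w: "w \<in> V" "N w = 1"
    and pos: "\<forall>\<^sub>F k in sequentially. 0 < N (t k - q)"
    and aligned: "\<And>\<epsilon>. \<epsilon> > 0 \<Longrightarrow> \<forall>\<^sub>F k in sequentially.
       N (t k - q - N (t k - q) *\<^sub>R w) \<le> \<epsilon> * N (t k - q)"
    and degenerate: "(\<lambda>k. N (t k - q)) \<longlonglongrightarrow> 0 \<or> filterlim (\<lambda>k. N (t k - q)) at_top sequentially"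
  shows "\<exists>i j k. N (t i - t j) powr \<beta> + N (t j - t k) powr \<beta> < N (t i - t k) powr \<beta>"
proof -
  define \<rho> where "\<rho> k = N (t k - q)" for k
  define \<kappa> :: real where "\<kappa> = (1/4) powr (1/(\<beta>-1))"
  define \<delta> where "\<delta> = min (1/40) (\<kappa>/2)"
  have \<delta>: "0 < \<delta>" "\<delta> \<le> 1/40" "\<delta> \<le> \<kappa>/2"
    by (auto simp: \<delta>_def \<kappa>_def)
  obtain K where K: "\<And>k. K \<le> k \<Longrightarrow> 0 < \<rho> k \<and> N (t k - q - \<rho> k *\<^sub>R w) \<le> 1/40 * \<rho> k"
    using eventually_conj[OF pos aligned[of "1/40"]]
    unfolding eventually_sequentially \<rho>_def by auto
  obtain i j k where ijk: "K \<le> i" "K \<le> j" "K \<le> k" "\<rho> j \<le> \<delta> * \<rho> i" "\<rho> k \<le> \<delta> * \<rho> j"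
    using exists_separated_triple[of \<rho> K \<delta>] degenerate K \<delta>(1) unfolding \<rho>_def by blast
  have near: "N (t a - t c - \<rho> a *\<^sub>R w) \<le> \<rho> a / 10"
    if "K \<le> a" "K \<le> c" "\<rho> c \<le> \<delta> * \<rho> a" for a c
  proof -
    have "\<delta> * \<rho> a \<le> 1/40 * \<rho> a"
      using \<delta>(2) K[OF that(1)] by (intro mult_right_mono) auto
    then have "\<rho> c \<le> \<rho> a / 40"
      using that(3) by linarith
    moreover have "N (t a - t c - \<rho> a *\<^sub>R w) \<le> N (t a - q - \<rho> a *\<^sub>R w) + N (t c - q - \<rho> c *\<^sub>R w) + \<rho> c"
      using K[OF that(2)] by (intro N_diff_near_direction t q w) auto
    ultimately show ?thesis
      using K[OF that(1)] K[OF that(2)] by linarith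
  qed
  have "\<rho> j \<le> \<kappa> / 2 * \<rho> i"
    using ijk(4) \<delta>(3) K[OF ijk(1)] by (meson mult_right_mono less_imp_le order_trans)
  then have "N (t i - t j) powr \<beta> + N (t j - t k) powr \<beta> < N (t i - t k) powr \<beta>"
    using K ijk near[OF ijk(1,2,4)] near[OF ijk(2,3,5)] t w \<open>1 < \<beta>\<close> unfolding \<kappa>_def
    by (intro aligned_triple_violates_powr_triangle) auto
  then show ?thesis
    by blast
qed

lemma finite_if_powr_triangle:
  fixes \<beta> :: real
  assumes "1 < \<beta>" "S \<subseteq> V"
    and triangle: "\<And>a b c. a \<in> S \<Longrightarrow> b \<in> S \<Longrightarrow> c \<in> S \<Longrightarrow>
      N (a - c) powr \<beta> \<le> N (a - b) powr \<beta> + N (b - c) powr \<beta>"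
  shows "finite S"
proof (rule ccontr)
  assume "infinite S"
  then obtain t :: "nat \<Rightarrow> nat \<Rightarrow> real" and q where t: "range t \<subseteq> S" and q: "q \<in> V"
    and pos: "\<forall>\<^sub>F k in sequentially. 0 < N (t k - q)"
    and degenerate: "(\<lambda>k. N (t k - q)) \<longlonglongrightarrow> 0 \<or> filterlim (\<lambda>k. N (t k - q)) at_top sequentially"
    using infinite_set_degenerate_seq assms(2) by metis
  have tV: "t k \<in> V" for k
    using t assms(2) by blast
  obtain r w where r: "strict_mono r" and w: "w \<in> V" "N w = 1"
    and aligned: "\<And>\<epsilon>. \<epsilon> > 0 \<Longrightarrow> \<forall>\<^sub>F k in sequentially.
       N (t (r k) - q - N (t (r k) - q) *\<^sub>R w) \<le> \<epsilon> * N (t (r k) - q)"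
    using exists_subseq_converging_direction[OF tV q pos] by blast
  have "(\<lambda>k. N (t (r k) - q)) \<longlonglongrightarrow> 0 \<or> filterlim (\<lambda>k. N (t (r k) - q)) at_top sequentially"
    using degenerate LIMSEQ_subseq_LIMSEQ[OF _ r] filterlim_compose[OF _ filterlim_subseq[OF r]]
    by (auto simp: comp_def)
  then obtain i j k where "N (t (r i) - t (r j)) powr \<beta> + N (t (r j) - t (r k)) powr \<beta>
      < N (t (r i) - t (r k)) powr \<beta>"
    using aligned_degenerate_seq_violates_powr_triangle[OF assms(1) tV q w eventually_subseq[OF r pos] aligned]
    by blast
  then show False
    using triangle t by (meson not_le range_subsetD)
qed

end

section \<open>Finite metric spaces embed into sup-norm spaces\<close>

definition sup_norm :: "nat \<Rightarrow> (nat \<Rightarrow> real) \<Rightarrow> real" where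
  "sup_norm m v = Max (insert 0 ((\<lambda>i. \<bar>v i\<bar>) ` {..<m}))"

lemma abs_le_sup_norm: "i < m \<Longrightarrow> \<bar>v i\<bar> \<le> sup_norm m v"
  by (auto simp: sup_norm_def)

lemma sup_norm_nonneg: "0 \<le> sup_norm m v"
  by (auto simp: sup_norm_def)

lemma sup_norm_le: "0 \<le> c \<Longrightarrow> (\<And>i. i < m \<Longrightarrow> \<bar>v i\<bar> \<le> c) \<Longrightarrow> sup_norm m v \<le> c"
  by (auto simp: sup_norm_def)

lemma sup_norm_scale: "sup_norm m (\<lambda>i. c * v i) = \<bar>c\<bar> * sup_norm m v"
proof (cases "c = 0")
  case True
  then show ?thesis
    using sup_norm_le[of 0 m "\<lambda>i. 0"] sup_norm_nonneg[of m "\<lambda>i. 0"] by simp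
next
  case False
  have "sup_norm m (\<lambda>i. c * v i) \<le> \<bar>c\<bar> * sup_norm m v"
    by (intro sup_norm_le) (auto simp: abs_mult sup_norm_nonneg intro: mult_left_mono abs_le_sup_norm)
  moreover have "sup_norm m v \<le> sup_norm m (\<lambda>i. c * v i) / \<bar>c\<bar>"
    using False abs_le_sup_norm[of _ m "\<lambda>i. c * v i"]
    by (intro sup_norm_le) (auto simp: sup_norm_nonneg abs_mult pos_le_divide_eq mult.commute)
  ultimately show ?thesis
    using False by (simp add: pos_le_divide_eq mult.commute)
qed

lemma is_norm_on_Rn_sup_norm: "is_norm_on_Rn m (sup_norm m)"
  unfolding is_norm_on_Rn_def
proof (intro conjI ballI allI)
  fix v
  assume v: "v \<in> coord_space m"
  show "0 \<le> sup_norm m v"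
    by (rule sup_norm_nonneg)
  have "v i = 0" if "sup_norm m v = 0" for i
    using abs_le_sup_norm[of i m v] v that by (cases "i < m") (auto simp: coord_space_def)
  then show "sup_norm m v = 0 \<longleftrightarrow> v = (\<lambda>i. 0)"
    using sup_norm_le[of 0 m "\<lambda>i. 0"] sup_norm_nonneg[of m "\<lambda>i. 0"] by auto
next
  fix u v
  show "sup_norm m (\<lambda>i. u i + v i) \<le> sup_norm m u + sup_norm m v"
    using abs_le_sup_norm[of _ m u] abs_le_sup_norm[of _ m v]
    by (intro sup_norm_le) (auto simp: sup_norm_nonneg intro: add_nonneg_nonneg abs_triangle_ineq[THEN order_trans] add_mono)
qed (rule sup_norm_scale)

lemma finite_Metric_space_embeds_isometrically:
  assumes "Metric_space X d" "finite X"
  shows "embeds_isometrically_fin_dim_normed X d"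
proof -
  interpret Metric_space X d
    by fact
  define m where "m = card X"
  obtain g where g: "bij_betw g {..<m} X"
    using ex_bij_betw_nat_finite[OF assms(2)] unfolding m_def atLeast0LessThan by blast
  define f where "f x = (\<lambda>i. if i < m then d x (g i) else 0)" for x
  have "sup_norm m (\<lambda>i. f x i - f y i) = d x y" if "x \<in> X" "y \<in> X" for x y
  proof (rule antisym)
    have "\<bar>d x (g i) - d y (g i)\<bar> \<le> d x y" if "i < m" for i
      using g \<open>x \<in> X\<close> \<open>y \<in> X\<close> that triangle[of x y "g i"] triangle[of y x "g i"] commute[of x y]
      by (auto simp: bij_betw_def abs_le_iff)
    then show "sup_norm m (\<lambda>i. f x i - f y i) \<le> d x y"
      using that by (intro sup_norm_le) (auto simp: f_def)
    obtain i where "i < m" "g i = y"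
      using g \<open>y \<in> X\<close> by (auto simp: bij_betw_def)
    then show "d x y \<le> sup_norm m (\<lambda>i. f x i - f y i)"
      using abs_le_sup_norm[of i m "\<lambda>i. f x i - f y i"] that by (simp add: f_def)
  qed
  moreover have "f ` X \<subseteq> coord_space m"
    by (auto simp: f_def coord_space_def)
  ultimately show ?thesis
    unfolding embeds_isometrically_fin_dim_normed_def using is_norm_on_Rn_sup_norm by blast
qed

lemma finite_if_snowflake_embeds:
  assumes "Metric_space X d" "0 < \<alpha>" "\<alpha> < 1"
    and "embeds_isometrically_fin_dim_normed X (\<lambda>x y. d x y powr \<alpha>)"
  shows "finite X"
proof -
  interpret Metric_space X d
    by fact
  obtain n N f where N: "is_norm_on_Rn n N" and f: "f ` X \<subseteq> coord_space n"
    and iso_pointwise: "\<forall>x\<in>X. \<forall>y\<in>X. N (\<lambda>i. f x i - f y i) = d x y powr \<alpha>"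
    using assms(4) unfolding embeds_isometrically_fin_dim_normed_def by blast
  interpret coord_norm n N
    by (rule coord_norm.intro[OF N])
  have iso: "N (f x - f y) = d x y powr \<alpha>" if "x \<in> X" "y \<in> X" for x y
    using iso_pointwise that by (simp add: fun_diff_def)
  have "finite (f ` X)"
  proof (rule finite_if_powr_triangle)
    show "1 < 1 / \<alpha>"
      using assms by simp
    fix a b c
    assume "a \<in> f ` X" "b \<in> f ` X" "c \<in> f ` X"
    then obtain x y z where "x \<in> X" "y \<in> X" "z \<in> X" "a = f x" "b = f y" "c = f z"
      by blast
    then show "N (a - c) powr (1 / \<alpha>) \<le> N (a - b) powr (1 / \<alpha>) + N (b - c) powr (1 / \<alpha>)"
      using triangle[of x y z] iso assms(2) by (simp add: powr_powr)
  qed (rule f)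
  moreover have "inj_on f X"
  proof (rule inj_onI)
    fix x y
    assume "x \<in> X" "y \<in> X" "f x = f y"
    then have "d x y powr \<alpha> = 0"
      using iso[of x y] by simp
    then show "x = y"
      using zero \<open>x \<in> X\<close> \<open>y \<in> X\<close> by simp
  qed
  ultimately show ?thesis
    using finite_imageD by blast
qed

theorem corollary2p3:
  fixes X :: "'a set" and d :: "'a \<Rightarrow> 'a \<Rightarrow> real"
  assumes "Metric_space X d"
  shows "(\<exists>\<alpha>::real. 0 < \<alpha> \<and> \<alpha> < 1 \<and>
            embeds_isometrically_fin_dim_normed X (\<lambda>x y. d x y powr \<alpha>))
         \<longleftrightarrow> finite X"
proof
  assume "\<exists>\<alpha>::real. 0 < \<alpha> \<and> \<alpha> < 1 \<and> embeds_isometrically_fin_dim_normed X (\<lambda>x y. d x y powr \<alpha>)"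
  then show "finite X"
    using finite_if_snowflake_embeds[OF assms] by blast
next
  assume "finite X"
  then have "embeds_isometrically_fin_dim_normed X (\<lambda>x y. d x y powr (1/2))"
    using Metric_space_powr[OF assms] by (intro finite_Metric_space_embeds_isometrically) auto
  then show "\<exists>\<alpha>::real. 0 < \<alpha> \<and> \<alpha> < 1 \<and> embeds_isometrically_fin_dim_normed X (\<lambda>x y. d x y powr \<alpha>)"
    by (intro exI[of _ "1/2"]) auto
qed

end
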